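(* In the setting below, under the persistent excitation assumption and the inexact disturbance bound assumption, the minimal parameter set $\Theta_t=\Theta_0\cap\bigcap_{j=1}^t\Delta_j$ converges with probability 1 to a set $\Theta_\infty=\bigcap_{t\ge0}\Theta_t$ satisfying $\Theta_\infty\subseteq\{\theta\in\mathbb{R}^p:\|\theta-\theta^\ast\|\le\rho\sqrt{N_u/\beta}\}$.
   Context: Setting: $\theta^\ast\in\mathbb{R}^p$ is a fixed (unknown) parameter vector. $\Theta_0\subset\mathbb{R}^p$ is a compact convex polytope containing $\theta^\ast$. $\mathcal{W}=\{w\in\mathbb{R}^{n_x}:\Pi_w w\le\pi_w\}$ is a compact convex polytope with $\pi_w>0$. The disturbances $w_0,w_1,\dots$ are independent random vectors in $\mathbb{R}^{n_x}$. $D_0,D_1,\dots\in\mathbb{R}^{n_x\times p}$ is a given (non-random) sequence of regressor matrices. For $t\ge1$ the (random) unfalsified parameter set is $\Delta_t=\{\theta\in\mathbb{R}^p: D_{t-1}(\theta^\ast-\theta)+w_{t-1}\in\mathcal{W}\}$. $\|\cdot\|$ is the Euclidean norm (induced 2-norm for matrices); $\mathcal{B}=\{x\in\mathbb{R}^{n_x}:\|x\|\le1\}$; $\oplus$ is Minkowski sum. Persistent excitation assumption: there exist $\tau>0$, $\beta>0$ and an integer $N_u\ge\lceil p/n_x\rceil$ such that for every $t\ge0$, $\|D_t\|\le\tau$ and $\sum_{j=t}^{t+N_u-1}D_j^\top D_j\succeq\beta I$. Inexact disturbance bound assumption: there exist a compact set $\Omega\subset\mathbb{R}^{n_x}$ and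 $\rho>0$ with $\Omega\subseteq\mathcal{W}\subseteq\Omega\oplus\rho\mathcal{B}$, such that $w_t\in\Omega$ for all $t$, and a function $p_w:(0,\infty)\to(0,1]$ such that for all $w^0\in\partial\Omega$ (boundary of $\Omega$), all $\epsilon>0$ and all $t\ge0$, $\Pr\{\|w_t-w^0\|<\epsilon\}\ge p_w(\epsilon)$. *)

theory Defs
  imports "HOL-Analysis.Analysis" "HOL-Probability.Probability"
begin

definition unfalsified_set ::
  "(nat \<Rightarrow> real^'p^'n) \<Rightarrow> (real^'n) set \<Rightarrow> real^'p \<Rightarrow> (nat \<Rightarrow> 'w \<Rightarrow> real^'n)
     \<Rightarrow> nat \<Rightarrow> 'w \<Rightarrow> (real^'p) set" where
  "unfalsified_set D W thetas w t \<omega> =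
     {\<theta>. D (t - 1) *v (thetas - \<theta>) + w (t - 1) \<omega> \<in> W}"

definition min_param_set ::
  "(real^'p) set \<Rightarrow> (nat \<Rightarrow> real^'p^'n) \<Rightarrow> (real^'n) set \<Rightarrow> real^'p
     \<Rightarrow> (nat \<Rightarrow> 'w \<Rightarrow> real^'n) \<Rightarrow> nat \<Rightarrow> 'w \<Rightarrow> (real^'p) set" where
  "min_param_set Theta0 D W thetas w t \<omega> =
     Theta0 \<inter> (\<Inter>j\<in>{1..t}. unfalsified_set D W thetas w j \<omega>)"

definition limit_param_set ::
  "(real^'p) set \<Rightarrow> (nat \<Rightarrow> real^'p^'n) \<Rightarrow> (real^'n) set \<Rightarrow> real^'p
     \<Rightarrow> (nat \<Rightarrow> 'w \<Rightarrow> real^'n) \<Rightarrow> 'w \<Rightarrow> (real^'p) set" where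
  "limit_param_set Theta0 D W thetas w \<omega> =
     (\<Inter>t. min_param_set Theta0 D W thetas w t \<omega>)"

definition hausdorff_dist :: "'a::metric_space set \<Rightarrow> 'a set \<Rightarrow> real" where
  "hausdorff_dist A B = max (SUP a\<in>A. infdist a B) (SUP b\<in>B. infdist b A)"

end

theory Submission
  imports Defs
begin

text \<open>The sets \<open>\<Theta>\<^sub>t\<close> are compact and decreasing, hence converge in Hausdorff distance to their
intersection \<open>\<Theta>\<^sub>\<infinity>\<close>. For the radius bound fix \<open>\<theta> \<in> \<Theta>\<^sub>\<infinity>\<close> and a point \<open>c\<close> near \<open>\<theta>\<close>. Each disturbance
\<open>w\<^sub>j\<close> lands, with probability at least \<open>p\<^sub>w(\<epsilon>)\<close>, within \<open>\<epsilon>\<close> of the boundary point \<open>s\<^sub>j\<close> of \<open>\<Omega>\<close>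
supporting \<open>\<Omega>\<close> in direction \<open>D\<^sub>j(\<theta>\<^sup>* - c)\<close>; by independence, almost surely some window of
\<open>N\<^sub>u\<close> consecutive times consists of such hits, simultaneously for all \<open>c\<close> in a countable dense
set and all \<open>\<epsilon> = 1/(k+1)\<close>. On that window, \<open>D\<^sub>j(\<theta>\<^sup>* - \<theta>) + w\<^sub>j \<in> W \<subseteq> \<Omega> \<oplus> \<rho>\<B>\<close> forces
\<open>\<parallel>D\<^sub>j(\<theta>\<^sup>* - c)\<parallel> \<le> \<rho> + \<epsilon> + \<tau>\<parallel>\<theta> - c\<parallel>\<close>, and persistent excitation turns these \<open>N\<^sub>u\<close> bounds into
\<open>\<parallel>\<theta>\<^sup>* - c\<parallel> \<le> \<surd>(N\<^sub>u/\<beta>) (\<rho> + \<epsilon> + \<tau>\<parallel>\<theta> - c\<parallel>)\<close>. Let \<open>\<epsilon>\<close> and \<open>\<parallel>\<theta> - c\<parallel>\<close> tend to \<open>0\<close>.\<close>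

lemma frontier_support_point:
  fixes S :: "'a::euclidean_space set"
  assumes "compact S" "S \<noteq> {}"
  obtains s where "s \<in> frontier S" "\<And>a. a \<in> S \<Longrightarrow> v \<bullet> a \<le> v \<bullet> s"
proof (cases "v = 0")
  case True
  have "S \<noteq> UNIV" using compact_imp_bounded[OF assms(1)] by auto
  then show ?thesis using that frontier_not_empty[OF assms(2)] True by auto
next
  case False
  have "continuous_on S (\<lambda>a. v \<bullet> a)" by (intro continuous_intros)
  then obtain s where s: "s \<in> S" and max: "\<And>a. a \<in> S \<Longrightarrow> v \<bullet> a \<le> v \<bullet> s"
    using continuous_attains_sup[OF assms] by blast
  have "s \<notin> interior S"
  proof
    assume "s \<in> interior S"
    then obtain e where "e > 0" "cball s e \<subseteq> S" by (meson mem_interior_cball)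
    then have "s + (e / norm v) *\<^sub>R v \<in> S" using False by (auto simp: dist_norm)
    from max[OF this] have "e * norm v \<le> 0"
      using False by (simp add: inner_add_right power2_norm_eq_inner[symmetric] power2_eq_square)
    then show False using \<open>e > 0\<close> False by (simp add: mult_le_0_iff)
  qed
  then have "s \<in> frontier S"
    using s compact_imp_closed[OF assms(1)] by (simp add: frontier_def)
  then show ?thesis using that max by blast
qed

lemma norm_le_of_support_point:
  fixes v u w s a b :: "'a::real_inner"
  assumes support: "\<And>x. x \<in> S \<Longrightarrow> v \<bullet> x \<le> v \<bullet> s" and "a \<in> S" and decomp: "u + w = a + b"
  shows "norm v \<le> norm b + dist w s + norm (v - u)"
proof -
  have "norm v \<le> norm (s + v - a)"
  proof (cases "v = 0")
    case False
    have "norm v * norm v \<le> v \<bullet> (s + v - a)"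
      using support[OF \<open>a \<in> S\<close>] by (simp add: inner_diff_right inner_add_right norm_eq_sqrt_inner)
    also have "\<dots> \<le> norm v * norm (s + v - a)" by (rule norm_cauchy_schwarz)
    finally show ?thesis using False by simp
  qed simp
  also have "s + v - a = b + (s - w) + (v - u)"
    using decomp by (simp add: algebra_simps)
  also have "norm \<dots> \<le> norm b + dist w s + norm (v - u)"
    by (metis dist_commute dist_norm norm_triangle_le order_refl add_mono norm_triangle_ineq)
  finally show ?thesis .
qed

lemma inner_sum_gram_matrix:
  fixes D :: "'i \<Rightarrow> real^'p^'n"
  assumes "finite S"
  shows "x \<bullet> ((\<Sum>j\<in>S. transpose (D j) ** D j) *v x) = (\<Sum>j\<in>S. (norm (D j *v x))\<^sup>2)"
proof -
  have "x \<bullet> ((transpose (D j) ** D j) *v x) = (norm (D j *v x))\<^sup>2" for j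
    by (metis dot_lmul_matrix matrix_vector_mul_assoc vector_transpose_matrix
        power2_norm_eq_inner)
  moreover have "(\<Sum>j\<in>S. transpose (D j) ** D j) *v x = (\<Sum>j\<in>S. (transpose (D j) ** D j) *v x)"
    using assms by (induction S rule: finite_induct) (auto simp: matrix_vector_mult_add_rdistrib)
  ultimately show ?thesis by (simp add: inner_sum_right)
qed

lemma norm_le_of_excitation:
  fixes D :: "'i \<Rightarrow> real^'p^'n"
  assumes "0 < beta" "finite S" "0 \<le> L"
    and PE: "beta * (x \<bullet> x) \<le> x \<bullet> ((\<Sum>j\<in>S. transpose (D j) ** D j) *v x)"
    and bound: "\<And>j. j \<in> S \<Longrightarrow> norm (D j *v x) \<le> L"
  shows "norm x \<le> sqrt (card S / beta) * L"
proof -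
  have "beta * (norm x)\<^sup>2 \<le> (\<Sum>j\<in>S. (norm (D j *v x))\<^sup>2)"
    using PE by (simp add: inner_sum_gram_matrix[OF \<open>finite S\<close>] power2_norm_eq_inner)
  also have "\<dots> \<le> card S * L\<^sup>2"
    using bound by (intro sum_bounded_above power_mono) auto
  finally have "(norm x)\<^sup>2 \<le> card S / beta * L\<^sup>2"
    using \<open>0 < beta\<close> by (simp add: field_simps)
  then have "norm x \<le> sqrt (card S / beta * L\<^sup>2)"
    using real_le_rsqrt by blast
  then show ?thesis using \<open>0 \<le> L\<close> by (metis real_sqrt_mult real_sqrt_abs abs_of_nonneg)
qed

lemma le_of_forall_perturbation:
  fixes x a rho tau :: real
  assumes "0 \<le> a" "0 \<le> tau"
    and perturbed: "\<And>r e. 0 < r \<Longrightarrow> 0 < e \<Longrightarrow> x \<le> a * (rho + e + tau * r) + r"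
  shows "x \<le> a * rho"
proof (rule field_le_epsilon)
  fix \<delta> :: real assume "0 < \<delta>"
  define r where "r = \<delta> / (a + a * tau + 1)"
  have pos: "0 < a + a * tau + 1" using assms by (simp add: add_nonneg_pos)
  then have "0 < r" using \<open>0 < \<delta>\<close> by (simp add: r_def)
  have "a * (rho + r + tau * r) + r = a * rho + r * (a + a * tau + 1)"
    by (simp add: algebra_simps)
  also have "\<dots> = a * rho + \<delta>" using pos by (simp add: r_def)
  finally show "x \<le> a * rho + \<delta>" using perturbed[OF \<open>0 < r\<close> \<open>0 < r\<close>] by simp
qed

lemma closed_unfalsified_set:
  assumes "closed W"
  shows "closed (unfalsified_set D W thetas w t \<omega>)"
proof -
  have "unfalsified_set D W thetas w t \<omega>
        = (\<lambda>\<theta>. D (t - 1) *v (thetas - \<theta>) + w (t - 1) \<omega>) -` W"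
    by (auto simp: unfalsified_set_def)
  also have "closed \<dots>"
    using assms by (intro closed_vimage continuous_intros
        continuous_on_compose2[OF matrix_vector_mult_linear_continuous_on]) auto
  finally show ?thesis .
qed

lemma compact_min_param_set:
  "compact Theta0 \<Longrightarrow> closed W \<Longrightarrow> compact (min_param_set Theta0 D W thetas w t \<omega>)"
  unfolding min_param_set_def
  by (intro compact_Int_closed closed_INT ballI closed_unfalsified_set)

lemma decseq_min_param_set: "decseq (\<lambda>t. min_param_set Theta0 D W thetas w t \<omega>)"
  by (auto simp: decseq_def min_param_set_def)

lemma true_param_in_min_param_set:
  "thetas \<in> Theta0 \<Longrightarrow> (\<And>j. w j \<omega> \<in> W) \<Longrightarrow> thetas \<in> min_param_set Theta0 D W thetas w t \<omega>"
  by (simp add: min_param_set_def unfalsified_set_def)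

lemma limit_param_set_unfalsified:
  assumes "\<theta> \<in> limit_param_set Theta0 D W thetas w \<omega>"
  shows "D j *v (thetas - \<theta>) + w j \<omega> \<in> W"
proof -
  have "\<theta> \<in> min_param_set Theta0 D W thetas w (Suc j) \<omega>"
    using assms by (simp add: limit_param_set_def)
  then have "\<theta> \<in> unfalsified_set D W thetas w (Suc j) \<omega>"
    by (simp add: min_param_set_def)
  then show ?thesis by (simp add: unfalsified_set_def)
qed

lemma dist_le_of_excited_block:
  fixes D :: "nat \<Rightarrow> real^'p^'n" and w :: "nat \<Rightarrow> real^'n" and s :: "real^'n \<Rightarrow> real^'n"
  assumes support: "\<And>v a. a \<in> Omega \<Longrightarrow> v \<bullet> a \<le> v \<bullet> s v"
    and W_sub: "W \<subseteq> {a + b | a b. a \<in> Omega \<and> b \<in> cball 0 rho}"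
    and unfalsified: "\<And>j. D j *v (thetas - \<theta>) + w j \<in> W"
    and D_bound: "\<And>j. onorm (\<lambda>x. D j *v x) \<le> tau"
    and PE: "beta * ((thetas - c) \<bullet> (thetas - c))
               \<le> (thetas - c) \<bullet> ((\<Sum>j\<in>{t..<t+N}. transpose (D j) ** D j) *v (thetas - c))"
    and near: "\<And>j. j \<in> {t..<t+N} \<Longrightarrow> dist (w j) (s (D j *v (thetas - c))) < e"
    and beta: "0 < beta" and signs: "0 \<le> rho" "0 \<le> tau" "0 < e"
  shows "dist thetas \<theta> \<le> sqrt (N / beta) * (rho + e + tau * dist \<theta> c) + dist \<theta> c"
proof -
  have bound: "norm (D j *v (thetas - c)) \<le> rho + e + tau * dist \<theta> c" if j: "j \<in> {t..<t+N}" for j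
  proof -
    obtain a b where ab: "D j *v (thetas - \<theta>) + w j = a + b" "a \<in> Omega" "norm b \<le> rho"
      using W_sub unfalsified[of j] by auto
    have "norm (D j *v (\<theta> - c)) \<le> onorm (\<lambda>x. D j *v x) * norm (\<theta> - c)"
      by (rule onorm) (simp add: matrix_vector_mult_linear_continuous_on bounded_linear_intros)
    also have "\<dots> \<le> tau * dist \<theta> c"
      using D_bound[of j] by (simp add: dist_norm mult_right_mono)
    finally have "norm (D j *v (thetas - c) - D j *v (thetas - \<theta>)) \<le> tau * dist \<theta> c"
      by (simp add: matrix_vector_mult_diff_distrib[symmetric])
    then show ?thesis
      using norm_le_of_support_point[where v = "D j *v (thetas - c)", OF support ab(2,1)]
        ab(3) near[OF j] by linarith
  qed
  have "dist thetas \<theta> \<le> norm (thetas - c) + dist \<theta> c"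
    by (metis dist_norm dist_triangle dist_commute)
  also have "norm (thetas - c) \<le> sqrt (N / beta) * (rho + e + tau * dist \<theta> c)"
    using norm_le_of_excitation[OF beta _ _ PE bound] signs by simp
  finally show ?thesis by simp
qed

lemma limit_param_set_subset_cball:
  fixes D :: "nat \<Rightarrow> real^'p^'n" and w :: "nat \<Rightarrow> 'w \<Rightarrow> real^'n" and s :: "real^'n \<Rightarrow> real^'n"
  assumes support: "\<And>v a. a \<in> Omega \<Longrightarrow> v \<bullet> a \<le> v \<bullet> s v"
    and W_sub: "W \<subseteq> {a + b | a b. a \<in> Omega \<and> b \<in> cball 0 rho}"
    and D_bound: "\<And>j. onorm (\<lambda>x. D j *v x) \<le> tau"
    and PE: "\<And>t x. beta * (x \<bullet> x) \<le> x \<bullet> ((\<Sum>j\<in>{t..<t+N}. transpose (D j) ** D j) *v x)"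
    and dense: "\<And>\<theta> r. 0 < r \<Longrightarrow> \<exists>c\<in>C. dist \<theta> c < r"
    and excited: "\<And>c e. c \<in> C \<Longrightarrow> 0 < e \<Longrightarrow>
                    \<exists>t. \<forall>j\<in>{t..<t+N}. dist (w j \<omega>) (s (D j *v (thetas - c))) < e"
    and beta: "0 < beta" and signs: "0 \<le> rho" "0 \<le> tau"
  shows "limit_param_set Theta0 D W thetas w \<omega> \<subseteq> cball thetas (rho * sqrt (N / beta))"
proof
  fix \<theta> assume \<theta>: "\<theta> \<in> limit_param_set Theta0 D W thetas w \<omega>"
  have "dist thetas \<theta> \<le> sqrt (N / beta) * rho"
  proof (rule le_of_forall_perturbation)
    fix r e :: real assume "0 < r" "0 < e"
    obtain c where c: "c \<in> C" "dist \<theta> c < r" using dense[OF \<open>0 < r\<close>] by blast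
    obtain t where "\<forall>j\<in>{t..<t+N}. dist (w j \<omega>) (s (D j *v (thetas - c))) < e"
      using excited[OF c(1) \<open>0 < e\<close>] by blast
    then have "dist thetas \<theta> \<le> sqrt (N / beta) * (rho + e + tau * dist \<theta> c) + dist \<theta> c"
      using \<open>0 < e\<close> by (intro dist_le_of_excited_block[OF support W_sub
          limit_param_set_unfalsified[OF \<theta>] D_bound PE _ beta signs]) auto
    also have "\<dots> \<le> sqrt (N / beta) * (rho + e + tau * r) + r"
      using c(2) signs beta by (intro add_mono mult_left_mono) auto
    finally show "dist thetas \<theta> \<le> sqrt (N / beta) * (rho + e + tau * r) + r" .
  qed (use signs beta in auto)
  then show "\<theta> \<in> cball thetas (rho * sqrt (N / beta))"
    by (simp add: mult.commute)
qed

lemma infdist_Inter_eventually_less: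
  fixes T :: "nat \<Rightarrow> 'a::heine_borel set"
  assumes compact: "\<And>t. compact (T t)" and "decseq T" and "0 < r"
  shows "\<exists>t. \<forall>a\<in>T t. infdist a (\<Inter>t. T t) < r"
proof (rule ccontr)
  assume "\<not> ?thesis"
  then have far: "\<forall>t. \<exists>a\<in>T t. r \<le> infdist a (\<Inter>t. T t)" by (auto simp: not_less)
  define F where "F t = T t \<inter> {a. r \<le> infdist a (\<Inter>t. T t)}" for t
  have "\<Inter>(range F) \<noteq> {}"
  proof (rule compact_nest)
    show "compact (F t)" for t unfolding F_def using compact
      by (intro compact_Int_closed closed_Collect_le continuous_intros continuous_on_infdist) auto
    show "F t \<noteq> {}" for t using far by (auto simp: F_def)
    show "F n \<subseteq> F m" if "m \<le> n" for m n
      using \<open>decseq T\<close> that by (auto simp: F_def decseq_def)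
  qed
  then obtain a where "\<forall>t. a \<in> F t" by auto
  then have "a \<in> (\<Inter>t. T t)" "r \<le> infdist a (\<Inter>t. T t)" by (auto simp: F_def)
  then show False using \<open>0 < r\<close> by simp
qed

lemma hausdorff_dist_Inter_tendsto_0:
  fixes T :: "nat \<Rightarrow> 'a::heine_borel set"
  assumes compact: "\<And>t. compact (T t)" and nonempty: "\<And>t. T t \<noteq> {}" and "decseq T"
  shows "(\<lambda>t. hausdorff_dist (T t) (\<Inter>t. T t)) \<longlonglongrightarrow> 0"
proof (rule LIMSEQ_I)
  fix r :: real assume "0 < r"
  then obtain t0 where t0: "\<forall>a\<in>T t0. infdist a (\<Inter>t. T t) < r / 2"
    using infdist_Inter_eventually_less[OF compact \<open>decseq T\<close>, of "r / 2"] by auto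
  have Inter_nonempty: "(\<Inter>t. T t) \<noteq> {}"
    using compact_nest[of T, OF compact nonempty] \<open>decseq T\<close> by (auto simp: decseq_def)
  have "norm (hausdorff_dist (T n) (\<Inter>t. T t) - 0) < r" if "t0 \<le> n" for n
  proof -
    have "(SUP a\<in>T n. infdist a (\<Inter>t. T t)) \<le> r / 2"
      using t0 \<open>decseq T\<close> that nonempty
      by (intro cSUP_least) (force simp: decseq_def intro: less_imp_le)+
    moreover have "(SUP b\<in>(\<Inter>t. T t). infdist b (T n)) = (SUP b\<in>(\<Inter>t. T t). 0 :: real)"
      by (intro SUP_cong) auto
    moreover have "\<dots> = 0" using Inter_nonempty by simp
    ultimately show ?thesis using \<open>0 < r\<close> by (simp add: hausdorff_dist_def)
  qed
  then show "\<exists>no. \<forall>n\<ge>no. norm (hausdorff_dist (T n) (\<Inter>t. T t) - 0) < r" by blast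
qed

lemma (in prob_space) AE_ex_of_indep_vars:
  fixes Y :: "nat \<Rightarrow> 'a \<Rightarrow> 'b"
  assumes ind: "indep_vars M' Y UNIV"
    and A: "\<And>m. A m \<in> sets (M' m)"
    and p: "\<And>m. p \<le> prob (Y m -` A m \<inter> space M)" and p_pos: "0 < p"
  shows "AE \<omega> in M. \<exists>m. Y m \<omega> \<in> A m"
proof -
  have Y: "Y m \<in> measurable M (M' m)" for m
    using ind by (auto simp: indep_vars_def)
  define Miss where "Miss m = Y m -` (space (M' m) - A m) \<inter> space M" for m
  have Miss_ev: "Miss m \<in> events" for m
    unfolding Miss_def by (intro measurable_sets[OF Y] sets.Diff sets.top A)
  have prob_Miss: "prob (Miss m) \<le> 1 - p" for m
  proof -
    have "Miss m = space M - (Y m -` A m \<inter> space M)"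
      using measurable_space[OF Y] by (auto simp: Miss_def)
    then show ?thesis
      using p[of m] by (simp add: prob_compl measurable_sets[OF Y A])
  qed
  have p_le_1: "p \<le> 1"
    using p[of 0] prob_le_1 order_trans by blast
  have "prob (\<Inter>m. Miss m) \<le> (1 - p) ^ Suc K" for K
  proof -
    have "prob (\<Inter>m. Miss m) \<le> prob (\<Inter>m\<in>{..K}. Miss m)"
      using Miss_ev by (intro finite_measure_mono) auto
    also have "\<dots> = (\<Prod>m\<in>{..K}. prob (Miss m))"
      unfolding Miss_def by (rule indep_varsD[OF ind]) (auto intro: A)
    also have "\<dots> \<le> (\<Prod>m\<in>{..K}. 1 - p)"
      by (intro prod_mono) (auto simp: prob_Miss)
    finally show ?thesis by simp
  qed
  then have "prob (\<Inter>m. Miss m) \<le> 0"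
    using p_pos p_le_1 by (intro LIMSEQ_le_const[OF LIMSEQ_Suc[OF LIMSEQ_realpow_zero[of "1 - p"]]]) auto
  then have "prob (\<Inter>m. Miss m) = 0"
    by (meson antisym measure_nonneg)
  then have "AE \<omega> in M. \<omega> \<notin> (\<Inter>m. Miss m)"
    using Miss_ev by (subst prob_eq_0[symmetric]) auto
  then show ?thesis
    by (rule AE_mp) (auto simp: Miss_def measurable_space[OF Y])
qed

lemma (in prob_space) AE_ex_block_of_indep_vars:
  fixes X :: "nat \<Rightarrow> 'a \<Rightarrow> 'b::topological_space"
  assumes ind: "indep_vars (\<lambda>_. borel) X UNIV"
    and B: "\<And>j. B j \<in> sets borel"
    and q: "\<And>j. q \<le> prob (X j -` B j \<inter> space M)" and q_pos: "0 < q"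
    and N_pos: "0 < N"
  shows "AE \<omega> in M. \<exists>t. \<forall>j\<in>{t..<t+N}. X j \<omega> \<in> B j"
proof -
  define K where "K m = {m*N..<m*N+N}" for m
  have "disjoint_family K"
  unfolding disjoint_family_on_def
  proof (intro ballI impI)
    fix m m' :: nat assume "m \<noteq> m'"
    moreover have "K m \<inter> K m' = {}" if "m < m'" for m m'
    proof -
      have "m*N + N \<le> m'*N" using that mult_le_mono1[of "Suc m" m' N] by simp
      then show ?thesis by (auto simp: K_def)
    qed
    ultimately show "K m \<inter> K m' = {}" by (metis inf_commute linorder_neq_iff)
  qed
  then have ind_K: "indep_vars (\<lambda>m. PiM (K m) (\<lambda>_. borel)) (\<lambda>m \<omega>. restrict (\<lambda>j. X j \<omega>) (K m)) UNIV"
    by (intro indep_vars_restrict[OF ind]) auto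
  have "AE \<omega> in M. \<exists>m. restrict (\<lambda>j. X j \<omega>) (K m) \<in> PiE (K m) B"
  proof (rule AE_ex_of_indep_vars[OF ind_K])
    show "PiE (K m) B \<in> sets (PiM (K m) (\<lambda>_. borel))" for m
      by (auto simp: K_def intro: sets_PiM_I_finite B)
    show "q ^ N \<le> prob ((\<lambda>\<omega>. restrict (\<lambda>j. X j \<omega>) (K m)) -` PiE (K m) B \<inter> space M)" for m
    proof -
      have "(\<lambda>\<omega>. restrict (\<lambda>j. X j \<omega>) (K m)) -` PiE (K m) B \<inter> space M
            = (\<Inter>j\<in>K m. X j -` B j \<inter> space M)"
        using N_pos by (auto simp: K_def Pi_iff)
      moreover have "prob (\<Inter>j\<in>K m. X j -` B j \<inter> space M) = (\<Prod>j\<in>K m. prob (X j -` B j \<inter> space M))"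
        using N_pos B by (intro indep_varsD[OF ind]) (auto simp: K_def)
      moreover have "(\<Prod>j\<in>K m. q) \<le> (\<Prod>j\<in>K m. prob (X j -` B j \<inter> space M))"
        using q q_pos by (intro prod_mono) (auto intro: less_imp_le)
      ultimately show ?thesis by (simp add: K_def)
    qed
    show "0 < q ^ N" using q_pos by simp
  qed
  then show ?thesis
  proof (rule AE_mp, intro AE_I2 impI)
    fix \<omega> assume "\<exists>m. restrict (\<lambda>j. X j \<omega>) (K m) \<in> PiE (K m) B"
    then obtain m where "\<forall>j\<in>K m. X j \<omega> \<in> B j" by auto
    then show "\<exists>t. \<forall>j\<in>{t..<t+N}. X j \<omega> \<in> B j" unfolding K_def by blast
  qed
qed

lemma (in prob_space) AE_windows_near_targets:
  fixes w :: "nat \<Rightarrow> 'a \<Rightarrow> 'b::real_normed_vector" and z :: "'i \<Rightarrow> nat \<Rightarrow> 'b"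
  assumes ind: "indep_vars (\<lambda>_. borel) w UNIV" and "countable I" and "0 < N"
    and targets: "\<And>i j. i \<in> I \<Longrightarrow> z i j \<in> Z"
    and p_pos: "\<And>e. 0 < e \<Longrightarrow> 0 < p e"
    and hit: "\<And>z0 e t. z0 \<in> Z \<Longrightarrow> 0 < e \<Longrightarrow> p e \<le> prob {\<omega>\<in>space M. norm (w t \<omega> - z0) < e}"
  shows "AE \<omega> in M. \<forall>i\<in>I. \<forall>e>0. \<exists>t. \<forall>j\<in>{t..<t+N}. dist (w j \<omega>) (z i j) < e"
proof -
  have "AE \<omega> in M. \<forall>i\<in>I. \<forall>k::nat. \<exists>t. \<forall>j\<in>{t..<t+N}. w j \<omega> \<in> ball (z i j) (1 / Suc k)"
  proof (intro AE_ball_countable' AE_all_countable[THEN iffD2] allI)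
    fix i k assume "i \<in> I"
    have "w j -` ball (z i j) (1 / Suc k) \<inter> space M
          = {\<omega>\<in>space M. norm (w j \<omega> - z i j) < 1 / Suc k}" for j
      by (auto simp: dist_norm norm_minus_commute)
    then show "AE \<omega> in M. \<exists>t. \<forall>j\<in>{t..<t+N}. w j \<omega> \<in> ball (z i j) (1 / Suc k)"
      using hit targets[OF \<open>i \<in> I\<close>] p_pos
      by (intro AE_ex_block_of_indep_vars[where q = "p (1 / Suc k)", OF ind _ _ _ \<open>0 < N\<close>]) auto
  qed fact
  then show ?thesis
  proof (rule AE_mp, intro AE_I2 impI ballI allI)
    fix \<omega> i and e :: real
    assume near: "\<forall>i\<in>I. \<forall>k::nat. \<exists>t. \<forall>j\<in>{t..<t+N}. w j \<omega> \<in> ball (z i j) (1 / Suc k)"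
      and "i \<in> I" "0 < e"
    obtain k :: nat where k: "1 / Suc k < e" using \<open>0 < e\<close> nat_approx_posE by blast
    obtain t where "\<forall>j\<in>{t..<t+N}. w j \<omega> \<in> ball (z i j) (1 / Suc k)"
      using near \<open>i \<in> I\<close> by blast
    then show "\<exists>t. \<forall>j\<in>{t..<t+N}. dist (w j \<omega>) (z i j) < e"
      using k by (metis mem_ball dist_commute order.strict_trans)
  qed
qed

theorem corollary4:
  fixes M :: "'w measure"
    and thetas :: "real^'p"
    and Theta0 :: "(real^'p) set"
    and Pi_w :: "real^'n^'m" and pi_w :: "real^'m"
    and W :: "(real^'n) set"
    and w :: "nat \<Rightarrow> 'w \<Rightarrow> real^'n"
    and D :: "nat \<Rightarrow> real^'p^'n"
    and tau beta rho :: real and N_u :: nat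
    and Omega :: "(real^'n) set"
    and p_w :: "real \<Rightarrow> real"
  assumes prob: "prob_space M"
    and Theta0_poly: "polytope Theta0" and Theta0_compact: "compact Theta0"
    and Theta0_convex: "convex Theta0" and thetas_in: "thetas \<in> Theta0"
    and W_def: "W = {x. \<forall>i. (Pi_w *v x) $ i \<le> pi_w $ i}"
    and W_compact: "compact W" and W_convex: "convex W"
    and pi_pos: "\<forall>i. pi_w $ i > 0"
    and indep: "prob_space.indep_vars M (\<lambda>_. borel) w UNIV"
    (* persistent excitation *)
    and tau_pos: "tau > 0" and beta_pos: "beta > 0"
    and N_u_ge: "real N_u \<ge> of_int \<lceil>real CARD('p) / real CARD('n)\<rceil>"
    and D_bound: "\<forall>t. onorm (\<lambda>x. D t *v x) \<le> tau"
    and PE: "\<forall>t. \<forall>x. x \<bullet> ((\<Sum>j\<in>{t..t + N_u - 1}. transpose (D j) ** D j) *v x)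
                        \<ge> beta * (x \<bullet> x)"
    (* inexact disturbance bound *)
    and Omega_compact: "compact Omega" and rho_pos: "rho > 0"
    and Omega_sub: "Omega \<subseteq> W"
    and W_sub: "W \<subseteq> {a + b | a b. a \<in> Omega \<and> b \<in> cball 0 rho}"
    and w_in: "\<forall>t. \<forall>\<omega>\<in>space M. w t \<omega> \<in> Omega"
    and p_w_range: "\<forall>e>0. 0 < p_w e \<and> p_w e \<le> 1"
    and p_w_bound: "\<forall>w0\<in>frontier Omega. \<forall>e>0. \<forall>t.
                      measure M {\<omega>\<in>space M. norm (w t \<omega> - w0) < e} \<ge> p_w e"
  shows "AE \<omega> in M.
           (\<lambda>t. hausdorff_dist (min_param_set Theta0 D W thetas w t \<omega>)
                          (limit_param_set Theta0 D W thetas w \<omega>)) \<longlonglongrightarrow> 0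
         \<and> limit_param_set Theta0 D W thetas w \<omega> \<subseteq> cball thetas (rho * sqrt (real N_u / beta))"
proof -
  (* Only compactness of Theta0 and W enters; their polytope descriptions, convexity and
     the bound p_w \<le> 1 are not needed, and N_u \<ge> \<lceil>p/n\<rceil> is used only through N_u > 0. *)
  interpret prob_space M by (rule prob)
  have N_pos: "0 < N_u"
  proof -
    have "0 < \<lceil>real CARD('p) / real CARD('n)\<rceil>" by simp
    then show ?thesis using N_u_ge by linarith
  qed
  have "Omega \<noteq> {}" using w_in not_empty by blast
  then have "\<forall>v. \<exists>s. s \<in> frontier Omega \<and> (\<forall>a\<in>Omega. v \<bullet> a \<le> v \<bullet> s)"
    using frontier_support_point[OF Omega_compact] by metis
  then obtain s where s_frontier: "\<And>v. s v \<in> frontier Omega"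
    and s_support: "\<And>v a. a \<in> Omega \<Longrightarrow> v \<bullet> a \<le> v \<bullet> s v"
    by metis
  obtain C :: "(real^'p) set" where "countable C"
    and C_dense: "\<And>X. open X \<Longrightarrow> X \<noteq> {} \<Longrightarrow> \<exists>c\<in>C. c \<in> X"
    using countable_dense_setE by blast
  have "AE \<omega> in M. \<forall>c\<in>C. \<forall>e>0. \<exists>t. \<forall>j\<in>{t..<t+N_u}. dist (w j \<omega>) (s (D j *v (thetas - c))) < e"
    using p_w_range p_w_bound s_frontier
    by (intro AE_windows_near_targets[where Z = "frontier Omega" and p = p_w,
          OF indep \<open>countable C\<close> N_pos]) auto
  then show ?thesis
    using AE_space
  proof eventually_elim
    case (elim \<omega>)
    let ?T = "\<lambda>t. min_param_set Theta0 D W thetas w t \<omega>"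
    have "thetas \<in> ?T t" for t
      using elim w_in Omega_sub by (intro true_param_in_min_param_set[OF thetas_in]) auto
    then have "(\<lambda>t. hausdorff_dist (?T t) (\<Inter>t. ?T t)) \<longlonglongrightarrow> 0"
      using Theta0_compact compact_imp_closed[OF W_compact]
      by (intro hausdorff_dist_Inter_tendsto_0 compact_min_param_set decseq_min_param_set) auto
    moreover have "limit_param_set Theta0 D W thetas w \<omega> \<subseteq> cball thetas (rho * sqrt (N_u / beta))"
    proof (rule limit_param_set_subset_cball[OF s_support W_sub])
      show "beta * (x \<bullet> x) \<le> x \<bullet> ((\<Sum>j\<in>{t..<t+N_u}. transpose (D j) ** D j) *v x)" for t x
        using PE N_pos atLeastLessThanSuc_atLeastAtMost[of t "t + N_u - 1"] by simp
      show "\<exists>c\<in>C. dist \<theta> c < r" if "0 < r" for \<theta> r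
        using C_dense[of "ball \<theta> r"] that by auto
    qed (use elim D_bound beta_pos rho_pos tau_pos in auto)
    ultimately show ?case by (simp add: limit_param_set_def)
  qed
qed

end
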